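(* Let $K=2^m$ with $m\in\mathbb{N}$ and let $\Phi$ be the $K\times K$ Sylvester Hadamard matrix. Among all matrices of the form $Z=\Phi\,\mathrm{diag}(0,a)\,\Phi^T\in\mathbb{R}^{K\times K}$ with $a\in\mathbb{R}^{K-1}_{\ge0}$ satisfying $Z_{cc}-Z_{c'c}>0$ for all $c'\neq c$, the minimum possible rank is exactly $m=\log_2K$.
   Context: Sylvester Hadamard matrices: $\Phi_1=(1)$, $\Phi_{2^m}=\begin{bmatrix}\Phi_{2^{m-1}}&\Phi_{2^{m-1}}\\ \Phi_{2^{m-1}}&-\Phi_{2^{m-1}}\end{bmatrix}$. $\mathrm{diag}(0,a)$ is the $K\times K$ diagonal matrix with diagonal $(0,a_1,\dots,a_{K-1})$. *)

theory Defs
  imports "Jordan_Normal_Form.DL_Rank"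
begin

text \<open>Entries (0-indexed) of the Sylvester Hadamard matrix of order 2^m, defined by the
  block recursion Phi_1 = (1), Phi_{2^(m+1)} = [[Phi, Phi], [Phi, -Phi]].\<close>
fun sylvester_entry :: "nat \<Rightarrow> nat \<Rightarrow> nat \<Rightarrow> real" where
  "sylvester_entry 0 i j = 1"
| "sylvester_entry (Suc m) i j =
     (let h = 2 ^ m in
      if i < h \<and> j < h then sylvester_entry m i j
      else if i < h then sylvester_entry m i (j - h)
      else if j < h then sylvester_entry m (i - h) j
      else - sylvester_entry m (i - h) (j - h))"

definition sylvester_hadamard :: "nat \<Rightarrow> real mat" where
  "sylvester_hadamard m = mat (2 ^ m) (2 ^ m) (\<lambda>(i, j). sylvester_entry m i j)"

text \<open>diag(0,a): K x K diagonal matrix with diagonal (0, a_1, ..., a_{K-1});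
  the vector a has dimension K-1 and (0-indexed) a $ (i-1) is a_i.\<close>
definition diag0 :: "nat \<Rightarrow> real vec \<Rightarrow> real mat" where
  "diag0 K a = mat K K (\<lambda>(i, j). if i = j \<and> i \<noteq> 0 then a $ (i - 1) else 0)"

definition Zmat :: "nat \<Rightarrow> real vec \<Rightarrow> real mat" where
  "Zmat m a = sylvester_hadamard m * diag0 (2 ^ m) a * transpose_mat (sylvester_hadamard m)"

definition admissible :: "nat \<Rightarrow> real vec \<Rightarrow> bool" where
  "admissible m a \<longleftrightarrow>
     a \<in> carrier_vec (2 ^ m - 1) \<and> (\<forall>i < 2 ^ m - 1. a $ i \<ge> 0) \<and>
     (\<forall>c < 2 ^ m. \<forall>c' < 2 ^ m. c' \<noteq> c \<longrightarrow> Zmat m a $$ (c, c) - Zmat m a $$ (c', c) > 0)"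

end

theory Submission
  imports Defs
begin

(* Since Phi^T Phi = K I, the columns of Phi are eigenvectors of Z = Phi diag(0,a) Phi^T with
   eigenvalues K a_k, so rank Z is the size of the support S of (0,a).  If two rows c, c' of the
   +-1 matrix Phi agreed on S, column c of Z would have equal entries in rows c and c'; so the
   admissibility condition forces the K rows of Phi to have distinct sign patterns on S, whence
   K <= 2^|S| and |S| >= m.  Conversely, entry (c, 2^j) of Phi is -1 exactly when bit j of c is
   set, so putting weight 1 on the m columns 2^j makes Z_cc - Z_c'c twice the number of bits in
   which c and c' differ, which is positive. *)

context vec_space
begin

lemma rank_eq_card_lin_indpt_span:
  assumes T: "T \<subseteq> carrier_vec n" "finite T" "lin_indpt T"
    and span_eq: "span T = span (set (cols A))"
  shows "rank A = card T"
proof -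
  have "maximal T (\<lambda>U. U \<subseteq> T \<and> lin_indpt U)"
    using T(3) by (auto simp: maximal_def)
  then have "vectorspace.dim class_ring (span_vs T) = card T"
    by (rule dim_span[OF T(1,2)])
  then show ?thesis
    unfolding rank_def span_eq by simp
qed

lemma mult_mat_vec_in_col_space:
  assumes "A \<in> carrier_mat n nc" "x \<in> carrier_vec nc"
  shows "A *\<^sub>v x \<in> col_space A"
  using assms by (auto simp: col_space_eq)

lemma col_space_mult_subset:
  assumes A: "A \<in> carrier_mat n k" and B: "B \<in> carrier_mat k nc"
  shows "col_space (A * B) \<subseteq> col_space A"
proof
  fix y assume "y \<in> col_space (A * B)"
  then obtain x where x: "x \<in> carrier_vec nc" and y: "y = (A * B) *\<^sub>v x"
    using A B by (auto simp: col_space_eq[of "A * B" nc])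
  then have "y = A *\<^sub>v (B *\<^sub>v x)"
    using A B by simp
  then show "y \<in> col_space A"
    using A B x by (simp add: mult_mat_vec_in_col_space)
qed

lemma distinct_lin_indpt_cols_if_det_nonzero:
  assumes A: "A \<in> carrier_mat n n" and det: "det A \<noteq> 0"
  shows "distinct (cols A)" "lin_indpt (set (cols A))"
proof -
  have rank: "rank A = n"
    using det_rank_iff[OF A] det by simp
  then show "distinct (cols A)"
    using non_distinct_low_rank[OF A] by fastforce
  then show "lin_indpt (set (cols A))"
    by (rule full_rank_lin_indpt[OF A rank])
qed

end

lemma det_nonzero_if_transpose_mult_eq_smult_one:
  fixes H :: "'a :: field mat"
  assumes H: "H \<in> carrier_mat n n" and orth: "H\<^sup>T * H = c \<cdot>\<^sub>m 1\<^sub>m n" and "c \<noteq> 0"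
  shows "det H \<noteq> 0"
proof -
  have "det H * det H = c ^ n"
    using det_mult[of "H\<^sup>T" n H] det_transpose[OF H] H orth by simp
  then show ?thesis
    using \<open>c \<noteq> 0\<close> by auto
qed

lemma col_mult_mat_diag:
  fixes A :: "'a :: comm_semiring_0 mat"
  assumes A: "A \<in> carrier_mat nr n" and k: "k < n"
  shows "col (A * mat_diag n f) k = f k \<cdot>\<^sub>v col A k"
  using A k by (intro eq_vecI) (auto simp: mat_diag_mult_right[OF A] mult.commute)

lemma index_mult_mat_diag_mult_transpose:
  assumes H: "H \<in> carrier_mat n k" and "i < n" "j < n"
  shows "(H * mat_diag k f * H\<^sup>T) $$ (i, j) = (\<Sum>l<k. H $$ (i, l) * f l * H $$ (j, l))"
  using assms by (simp add: mat_diag_mult_right[OF H] scalar_prod_def atLeast0LessThan)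

lemma rank_mult_mat_diag_mult_transpose:
  fixes H :: "'a :: field mat"
  assumes H: "H \<in> carrier_mat n n" and orth: "H\<^sup>T * H = c \<cdot>\<^sub>m 1\<^sub>m n" and c: "c \<noteq> 0"
  shows "vec_space.rank n (H * mat_diag n f * H\<^sup>T) = card {k. k < n \<and> f k \<noteq> 0}"
proof -
  interpret vec_space "TYPE('a)" n .
  define S where "S = {k. k < n \<and> f k \<noteq> 0}"
  define T where "T = col H ` S"
  define Z where "Z = H * mat_diag n f * H\<^sup>T"
  have Z: "Z \<in> carrier_mat n n"
    unfolding Z_def using H by (intro mult_carrier_mat) auto
  have HD: "H * mat_diag n f \<in> carrier_mat n n"
    using H by simp
  have det: "det H \<noteq> 0"
    by (rule det_nonzero_if_transpose_mult_eq_smult_one[OF H orth c])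
  have T_cols: "T \<subseteq> set (cols H)"
    using H by (auto simp: T_def S_def cols_def)
  then have T_carrier: "T \<subseteq> carrier_vec n"
    using H cols_dim by blast
  have inj: "inj_on (col H) S"
    using distinct_lin_indpt_cols_if_det_nonzero(1)[OF H det] H
    by (auto simp: inj_on_def S_def distinct_conv_nth)
  have "Z * H = (H * mat_diag n f) * (H\<^sup>T * H)"
    unfolding Z_def using HD H by (intro assoc_mult_mat[of _ n n _ n]) auto
  also have "\<dots> = c \<cdot>\<^sub>m (H * mat_diag n f)"
    using mult_smult_distrib[OF HD one_carrier_mat] right_mult_one_mat[OF HD] by (simp add: orth)
  finally have ZH: "Z * H = c \<cdot>\<^sub>m (H * mat_diag n f)" .
  have "T \<subseteq> col_space Z"
  proof
    fix v assume "v \<in> T"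
    then obtain k where k: "k < n" "f k \<noteq> 0" and v: "v = col H k"
      by (auto simp: T_def S_def)
    have "Z *\<^sub>v col H k = col (Z * H) k"
      using col_mult2[OF Z H k(1)] by simp
    also have "\<dots> = c \<cdot>\<^sub>v col (H * mat_diag n f) k"
      unfolding ZH using HD k by (intro col_smult) auto
    also have "\<dots> = (c * f k) \<cdot>\<^sub>v col H k"
      using H k by (simp add: col_mult_mat_diag smult_smult_assoc)
    finally have "Z *\<^sub>v ((1 / (c * f k)) \<cdot>\<^sub>v col H k) = v"
      using Z H k c v by (simp add: mult_mat_vec smult_smult_assoc)
    then show "v \<in> col_space Z"
      using mult_mat_vec_in_col_space[OF Z] H k by force
  qed
  then have "span T \<subseteq> col_space Z"
    unfolding col_space_def using Z cols_dim by (intro span_subsetI) blast+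
  moreover have "col_space Z \<subseteq> span T"
  proof -
    have "set (cols (H * mat_diag n f)) \<subseteq> span T"
    proof
      fix w assume "w \<in> set (cols (H * mat_diag n f))"
      then obtain k where k: "k < n" and w: "w = f k \<cdot>\<^sub>v col H k"
        using carrier_matD[OF HD] col_mult_mat_diag[OF H] by (auto simp: cols_def)
      show "w \<in> span T"
        unfolding w using H k T_carrier span_mem[OF T_carrier]
        by (intro prod_in_span) (auto simp: T_def S_def)
    qed
    then have "col_space (H * mat_diag n f) \<subseteq> span T"
      unfolding col_space_def using T_carrier by (rule span_subsetI[rotated])
    then show ?thesis
      using col_space_mult_subset[OF HD, of "H\<^sup>T" n] H by (simp add: Z_def)
  qed
  ultimately have "span T = span (set (cols Z))"
    unfolding col_space_def by blast
  then have "rank Z = card T"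
    using T_carrier subset_li_is_li[OF distinct_lin_indpt_cols_if_det_nonzero(2)[OF H det] T_cols]
    by (intro rank_eq_card_lin_indpt_span) (auto simp: T_def S_def)
  then show ?thesis
    using card_image[OF inj] by (simp add: Z_def T_def S_def)
qed

lemma card_le_two_pow_card_support:
  fixes H :: "'a :: comm_ring_1 mat"
  assumes H: "H \<in> carrier_mat n n"
    and entries: "\<And>i j. i < n \<Longrightarrow> j < n \<Longrightarrow> H $$ (i, j) \<in> {1, -1}"
    and separated: "\<And>c c'. c < n \<Longrightarrow> c' < n \<Longrightarrow> c' \<noteq> c \<Longrightarrow>
      (H * mat_diag n f * H\<^sup>T) $$ (c', c) \<noteq> (H * mat_diag n f * H\<^sup>T) $$ (c, c)"
  shows "n \<le> 2 ^ card {k. k < n \<and> f k \<noteq> 0}"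
proof -
  define S where "S = {k. k < n \<and> f k \<noteq> 0}"
  define sign_pattern where "sign_pattern c = restrict (\<lambda>k. H $$ (c, k)) S" for c
  have "inj_on sign_pattern {..<n}"
  proof (rule inj_onI, rule ccontr)
    fix c c' assume c: "c \<in> {..<n}" and c': "c' \<in> {..<n}"
      and eq: "sign_pattern c = sign_pattern c'" and ne: "c \<noteq> c'"
    have "H $$ (c', l) * f l = H $$ (c, l) * f l" if "l < n" for l
      using fun_cong[OF eq, of l] that by (cases "f l = 0") (auto simp: sign_pattern_def S_def)
    then have "(H * mat_diag n f * H\<^sup>T) $$ (c', c) = (H * mat_diag n f * H\<^sup>T) $$ (c, c)"
      using c c' by (simp add: index_mult_mat_diag_mult_transpose[OF H] del: index_mult_mat)
    then show False
      using separated c c' ne by auto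
  qed
  moreover have "sign_pattern ` {..<n} \<subseteq> S \<rightarrow>\<^sub>E {1, -1}"
    using entries by (fastforce simp: sign_pattern_def S_def restrict_PiE_iff)
  moreover have "finite S"
    by (simp add: S_def)
  ultimately have "n \<le> card (S \<rightarrow>\<^sub>E {1, -1 :: 'a})"
    using card_inj_on_le[of sign_pattern "{..<n}"] by (simp add: finite_PiE)
  also have "\<dots> \<le> 2 ^ card S"
    using \<open>finite S\<close> by (simp add: card_funcsetE card_insert_if power_mono)
  finally show ?thesis
    by (simp add: S_def)
qed

lemma sum_lessThan_add: "(\<Sum>l<a + b. f l) = (\<Sum>l<a. f l) + (\<Sum>l<b. f (l + a :: nat))"
  by (induction b) (simp_all add: add_ac)

lemma bit_differs_if_neq:
  fixes c c' :: nat
  assumes "c < 2 ^ m" "c' < 2 ^ m" "c \<noteq> c'"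
  shows "\<exists>j<m. bit c j \<noteq> bit c' j"
proof -
  have "take_bit m c \<noteq> take_bit m c'"
    using assms by (simp add: take_bit_nat_eq_self)
  then obtain j where "bit (take_bit m c) j \<noteq> bit (take_bit m c') j"
    by (auto simp: bit_eq_iff)
  then show ?thesis
    by (auto simp: bit_take_bit_iff)
qed

lemma sylvester_entry_cases: "sylvester_entry m i j = 1 \<or> sylvester_entry m i j = -1"
  by (induction m arbitrary: i j) (auto simp: Let_def)

lemma sylvester_entry_sym: "sylvester_entry m i j = sylvester_entry m j i"
  by (induction m arbitrary: i j) (auto simp: Let_def)

lemma sylvester_entry_0: "sylvester_entry m i 0 = 1"
  by (induction m arbitrary: i) (auto simp: Let_def)

lemma sylvester_entry_Suc_low:
  "l < 2 ^ m \<Longrightarrow>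
    sylvester_entry (Suc m) i l = sylvester_entry m (if i < 2 ^ m then i else i - 2 ^ m) l"
  by (auto simp: Let_def)

lemma sylvester_entry_Suc_high:
  "l < 2 ^ m \<Longrightarrow> sylvester_entry (Suc m) i (l + 2 ^ m) =
    (if i < 2 ^ m then 1 else -1) * sylvester_entry m (if i < 2 ^ m then i else i - 2 ^ m) l"
  by (auto simp: Let_def)

lemma sylvester_entry_orthogonal:
  assumes "i < 2 ^ m" "j < 2 ^ m"
  shows "(\<Sum>l<2 ^ m. sylvester_entry m i l * sylvester_entry m j l) = (if i = j then 2 ^ m else 0)"
  using assms
proof (induction m arbitrary: i j)
  case 0
  then show ?case by simp
next
  case (Suc m)
  define i' where "i' = (if i < 2 ^ m then i else i - 2 ^ m)"
  define j' where "j' = (if j < 2 ^ m then j else j - 2 ^ m)"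
  define s where "s = (if i < 2 ^ m then 1 else -1) * (if j < 2 ^ m then 1 else -1 :: real)"
  have "i' < 2 ^ m" "j' < 2 ^ m"
    using Suc.prems by (auto simp: i'_def j'_def)
  then have IH: "(\<Sum>l<2 ^ m. sylvester_entry m i' l * sylvester_entry m j' l)
      = (if i' = j' then 2 ^ m else 0)"
    by (rule Suc.IH)
  have low: "sylvester_entry (Suc m) i l * sylvester_entry (Suc m) j l
      = sylvester_entry m i' l * sylvester_entry m j' l" if "l < 2 ^ m" for l
    using that by (simp add: sylvester_entry_Suc_low i'_def j'_def)
  have high: "sylvester_entry (Suc m) i (l + 2 ^ m) * sylvester_entry (Suc m) j (l + 2 ^ m)
      = s * (sylvester_entry m i' l * sylvester_entry m j' l)" if "l < 2 ^ m" for l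
    using that by (simp add: sylvester_entry_Suc_high i'_def j'_def s_def)
  have "(\<Sum>l<2 ^ Suc m. sylvester_entry (Suc m) i l * sylvester_entry (Suc m) j l)
      = (\<Sum>l<2 ^ m. sylvester_entry m i' l * sylvester_entry m j' l)
        + s * (\<Sum>l<2 ^ m. sylvester_entry m i' l * sylvester_entry m j' l)"
    using sum_lessThan_add[of "\<lambda>l. sylvester_entry (Suc m) i l * sylvester_entry (Suc m) j l"
        "2 ^ m" "2 ^ m"]
    by (simp add: mult_2 low high sum_distrib_left del: sylvester_entry.simps)
  also have "\<dots> = (if i = j then 2 ^ Suc m else 0)"
    unfolding IH using Suc.prems by (auto simp: i'_def j'_def s_def)
  finally show ?case .
qed

lemma sylvester_entry_pow2:
  assumes "c < 2 ^ m" "j < m"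
  shows "sylvester_entry m c (2 ^ j) = (if bit c j then -1 else 1)"
  using assms
proof (induction m arbitrary: c)
  case 0
  then show ?case by simp
next
  case (Suc m)
  have c_mod: "(if c < 2 ^ m then c else c - 2 ^ m) = c mod 2 ^ m"
    using Suc.prems(1) by (auto simp: le_mod_geq)
  show ?case
  proof (cases "j < m")
    case True
    have "bit (c mod 2 ^ m) j = bit c j"
      using True by (simp add: bit_take_bit_iff flip: take_bit_eq_mod)
    then show ?thesis
      using True Suc.IH[of "c mod 2 ^ m"] sylvester_entry_Suc_low[of "2 ^ j" m c]
      by (simp add: c_mod)
  next
    case False
    then have "j = m"
      using Suc.prems(2) by simp
    have "c div 2 ^ m = (if c < 2 ^ m then 0 else 1)"
      using Suc.prems(1) by (auto intro: div_nat_eqI)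
    then have "bit c m \<longleftrightarrow> \<not> c < 2 ^ m"
      by (simp add: bit_iff_odd)
    then show ?thesis
      using sylvester_entry_Suc_high[of 0 m c] \<open>j = m\<close> by (simp add: sylvester_entry_0)
  qed
qed

lemma sylvester_hadamard_carrier: "sylvester_hadamard m \<in> carrier_mat (2 ^ m) (2 ^ m)"
  by (simp add: sylvester_hadamard_def)

lemma sylvester_hadamard_index:
  "i < 2 ^ m \<Longrightarrow> j < 2 ^ m \<Longrightarrow> sylvester_hadamard m $$ (i, j) = sylvester_entry m i j"
  by (simp add: sylvester_hadamard_def)

lemma sylvester_hadamard_transpose_mult:
  "(sylvester_hadamard m)\<^sup>T * sylvester_hadamard m = 2 ^ m \<cdot>\<^sub>m 1\<^sub>m (2 ^ m)"
proof (rule eq_matI)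
  fix i j
  assume "i < dim_row (2 ^ m \<cdot>\<^sub>m 1\<^sub>m (2 ^ m) :: real mat)"
    and "j < dim_col (2 ^ m \<cdot>\<^sub>m 1\<^sub>m (2 ^ m) :: real mat)"
  then have ij: "i < 2 ^ m" "j < 2 ^ m"
    by simp_all
  have "((sylvester_hadamard m)\<^sup>T * sylvester_hadamard m) $$ (i, j)
      = (\<Sum>l<2 ^ m. sylvester_entry m l i * sylvester_entry m l j)"
    using ij by (simp add: sylvester_hadamard_def scalar_prod_def atLeast0LessThan)
  also have "\<dots> = (\<Sum>l<2 ^ m. sylvester_entry m i l * sylvester_entry m j l)"
    by (metis sylvester_entry_sym)
  also have "\<dots> = (2 ^ m \<cdot>\<^sub>m 1\<^sub>m (2 ^ m)) $$ (i, j)"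
    using ij by (simp add: sylvester_entry_orthogonal)
  finally show "((sylvester_hadamard m)\<^sup>T * sylvester_hadamard m) $$ (i, j)
      = (2 ^ m \<cdot>\<^sub>m 1\<^sub>m (2 ^ m)) $$ (i, j)" .
qed (simp_all add: sylvester_hadamard_def)

definition diag0_weight :: "real vec \<Rightarrow> nat \<Rightarrow> real" where
  "diag0_weight a k = (if k = 0 then 0 else a $ (k - 1))"

lemma diag0_eq_mat_diag: "diag0 K a = mat_diag K (diag0_weight a)"
  by (rule eq_matI) (auto simp: diag0_def mat_diag_def diag0_weight_def)

lemma Zmat_eq:
  "Zmat m a = sylvester_hadamard m * mat_diag (2 ^ m) (diag0_weight a) * (sylvester_hadamard m)\<^sup>T"
  by (simp add: Zmat_def diag0_eq_mat_diag)

lemma rank_Zmat: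
  "vec_space.rank (2 ^ m) (Zmat m a) = card {k. k < 2 ^ m \<and> diag0_weight a k \<noteq> 0}"
  unfolding Zmat_eq
  by (rule rank_mult_mat_diag_mult_transpose
      [OF sylvester_hadamard_carrier sylvester_hadamard_transpose_mult]) simp

lemma Zmat_index:
  assumes "i < 2 ^ m" "j < 2 ^ m"
  shows "Zmat m a $$ (i, j) =
    (\<Sum>l<2 ^ m. sylvester_entry m i l * diag0_weight a l * sylvester_entry m j l)"
  using assms
  by (simp add: Zmat_eq index_mult_mat_diag_mult_transpose[OF sylvester_hadamard_carrier]
      sylvester_hadamard_index del: index_mult_mat)

lemma card_support_ge_if_admissible:
  assumes "admissible m a"
  shows "m \<le> card {k. k < 2 ^ m \<and> diag0_weight a k \<noteq> 0}"
proof -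
  have "(2::nat) ^ m \<le> 2 ^ card {k. k < 2 ^ m \<and> diag0_weight a k \<noteq> 0}"
  proof (rule card_le_two_pow_card_support[OF sylvester_hadamard_carrier])
    show "sylvester_hadamard m $$ (i, j) \<in> {1, -1}" if "i < 2 ^ m" "j < 2 ^ m" for i j
      using that sylvester_entry_cases[of m i j] by (simp add: sylvester_hadamard_index)
    show "(sylvester_hadamard m * mat_diag (2 ^ m) (diag0_weight a) * (sylvester_hadamard m)\<^sup>T) $$ (c', c)
        \<noteq> (sylvester_hadamard m * mat_diag (2 ^ m) (diag0_weight a) * (sylvester_hadamard m)\<^sup>T) $$ (c, c)"
      if "c < 2 ^ m" "c' < 2 ^ m" "c' \<noteq> c" for c c'
      using assms that unfolding admissible_def Zmat_eq by fastforce
  qed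
  then show ?thesis
    by simp
qed

lemma Zmat_diagonal_minus:
  assumes "c < 2 ^ m" "c' < 2 ^ m"
  shows "Zmat m a $$ (c, c) - Zmat m a $$ (c', c) =
    (\<Sum>l<2 ^ m. diag0_weight a l * (1 - sylvester_entry m c' l * sylvester_entry m c l))"
proof -
  have "sylvester_entry m c l * sylvester_entry m c l = 1" for l
    using sylvester_entry_cases[of m c l] by auto
  then show ?thesis
    using assms by (simp add: Zmat_index sum_subtractf algebra_simps)
qed

definition power_of_two_weights :: "nat \<Rightarrow> real vec" where
  "power_of_two_weights m = vec (2 ^ m - 1) (\<lambda>i. if \<exists>j<m. Suc i = 2 ^ j then 1 else 0)"

lemma diag0_weight_power_of_two_weights:
  assumes "k < 2 ^ m"
  shows "diag0_weight (power_of_two_weights m) k = (if \<exists>j<m. k = 2 ^ j then 1 else 0)"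
proof (cases "k = 0")
  case True
  then show ?thesis
    by (simp add: diag0_weight_def)
next
  case False
  then have "k - 1 < 2 ^ m - 1" "Suc (k - 1) = k"
    using assms by auto
  then show ?thesis
    using False by (simp add: diag0_weight_def power_of_two_weights_def)
qed

lemma support_power_of_two_weights:
  "{k. k < 2 ^ m \<and> diag0_weight (power_of_two_weights m) k \<noteq> 0} = (\<lambda>j. 2 ^ j) ` {..<m}"
proof -
  have "k < 2 ^ m \<and> diag0_weight (power_of_two_weights m) k \<noteq> 0 \<longleftrightarrow> (\<exists>j<m. k = 2 ^ j)" for k
  proof
    assume "k < 2 ^ m \<and> diag0_weight (power_of_two_weights m) k \<noteq> 0"
    then show "\<exists>j<m. k = 2 ^ j"
      using diag0_weight_power_of_two_weights[of k m] by presburger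
  next
    assume "\<exists>j<m. k = 2 ^ j"
    then obtain j where "j < m" "k = 2 ^ j"
      by blast
    then show "k < 2 ^ m \<and> diag0_weight (power_of_two_weights m) k \<noteq> 0"
      using diag0_weight_power_of_two_weights[of k m] by auto
  qed
  then show ?thesis
    by blast
qed

lemma card_support_power_of_two_weights:
  "card {k. k < 2 ^ m \<and> diag0_weight (power_of_two_weights m) k \<noteq> 0} = m"
  unfolding support_power_of_two_weights by (simp add: card_image inj_on_def)

lemma admissible_power_of_two_weights: "admissible m (power_of_two_weights m)"
  unfolding admissible_def
proof (intro conjI allI impI)
  show "power_of_two_weights m \<in> carrier_vec (2 ^ m - 1)"
    by (simp add: power_of_two_weights_def)
  show "0 \<le> power_of_two_weights m $ i" if "i < 2 ^ m - 1" for i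
    using that by (simp add: power_of_two_weights_def)
  fix c c' :: nat assume c: "c < 2 ^ m" and c': "c' < 2 ^ m" and "c' \<noteq> c"
  then obtain j where j: "j < m" "bit c j \<noteq> bit c' j"
    using bit_differs_if_neq by metis
  let ?w = "diag0_weight (power_of_two_weights m)"
  let ?term = "\<lambda>l. ?w l * (1 - sylvester_entry m c' l * sylvester_entry m c l)"
  have "2 ^ j < (2::nat) ^ m"
    using j by simp
  then have "0 < ?term (2 ^ j)"
    using j c c' by (auto simp: diag0_weight_power_of_two_weights sylvester_entry_pow2)
  moreover have "0 \<le> ?term l" if "l < 2 ^ m" for l
    using that sylvester_entry_cases[of m c' l] sylvester_entry_cases[of m c l]
    by (auto simp: diag0_weight_power_of_two_weights)
  ultimately have "0 < (\<Sum>l<2 ^ m. ?term l)"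
    using \<open>2 ^ j < 2 ^ m\<close> by (intro sum_pos2[of _ "2 ^ j"]) auto
  then show "0 < Zmat m (power_of_two_weights m) $$ (c, c) - Zmat m (power_of_two_weights m) $$ (c', c)"
    using Zmat_diagonal_minus[OF c c'] by simp
qed

theorem propositionC1:
  fixes m :: nat
  shows "(\<exists>a. admissible m a \<and> vec_space.rank (2 ^ m) (Zmat m a) = m) \<and>
         (\<forall>a. admissible m a \<longrightarrow> m \<le> vec_space.rank (2 ^ m) (Zmat m a))"
proof (intro conjI allI impI)
  have "vec_space.rank (2 ^ m) (Zmat m (power_of_two_weights m)) = m"
    unfolding rank_Zmat by (rule card_support_power_of_two_weights)
  then show "\<exists>a. admissible m a \<and> vec_space.rank (2 ^ m) (Zmat m a) = m"
    using admissible_power_of_two_weights by blast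
  show "m \<le> vec_space.rank (2 ^ m) (Zmat m a)" if "admissible m a" for a
    unfolding rank_Zmat using that by (rule card_support_ge_if_admissible)
qed

end
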